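(* Let $m\ge n$, $B\in\mathbb R^{n\times m}$ of full row rank, $f,h$ convex and continuously differentiable with Lipschitz gradients, $\mathcal L(u,p)=f(u)-h(p)+(Bu,p)$ with saddle point $(u^*,p^* )$, and $T_{\mathcal U},\mathcal I_{\mathcal V}$ ($m\times m$), $T_{\mathcal P},\mathcal I_{\mathcal Q}$ ($n\times n$) symmetric positive definite. Suppose $h\in\mathcal S^{1,1}_{\mu_{h,T_{\mathcal P}},L_{h,T_{\mathcal P}}}$ w.r.t. $T_{\mathcal P}$ with $L_{h,T_{\mathcal P}}\le1$, $f\in\mathcal S^{1,1}_{\mu_{f,T_{\mathcal U}},L_{f,T_{\mathcal U}}}$ w.r.t. $T_{\mathcal U}$ with $L_{f,T_{\mathcal U}}\le1$, $f_B$ is strongly convex w.r.t. $\mathcal I_{\mathcal V}$ with $\mu_{f_B,\mathcal I_{\mathcal V}}>0$, and $h_B$ is strongly convex w.r.t. $\mathcal I_{\mathcal Q}$ with $\mu_{h_B,\mathcal I_{\mathcal Q}}>0$. Let $(u_k,p_k)$ be generated from $(u_0,p_0)$ by $$u_{k+1/2}=u_k-T_{\mathcal U}^{-1}(\nabla f(u_k)+B^\top p_k),\quad p_{k+1/2}=p_k-T_{\mathcal P}^{-1}(\nabla h(p_k)-Bu_k),$$ $$u_{k+1}=u_k-\alpha_k\mathcal I_{\mathcal V}^{-1}(\nabla f(u_k)+B^\top p_{k+1/2}),\quad p_{k+1}=p_k-\alpha_k\mathcal I_{\mathcal Q}^{-1}(\nabla h(p_k)-Bu_{k+1/2})$$ (equivalently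 $u_{k+1}=u_k+\alpha_k\mathcal G^u(u_k,p_k)$, $p_{k+1}=p_k+\alpha_k\mathcal G^p(u_k,p_k)$). Then $$\mathcal E(u_{k+1},p_{k+1})\le(1-\delta_k)\mathcal E(u_k,p_k)$$ for $0<\alpha_k<\min\{\mu_{f_B,\mathcal I_{\mathcal V}}/L_{\mathcal V}^2,\ \mu_{h_B,\mathcal I_{\mathcal Q}}/L_{\mathcal Q}^2\}$, where $\delta_k=\min\{\alpha_k(\mu_{f_B,\mathcal I_{\mathcal V}}-L_{\mathcal V}^2\alpha_k),\ \alpha_k(\mu_{h_B,\mathcal I_{\mathcal Q}}-L_{\mathcal Q}^2\alpha_k)\}$ satisfies $0<\delta_k<1$, with $$L_{\mathcal V}^2=2(L_{f_B,\mathcal I_{\mathcal V}}^2+L_S^2L_{e_{\mathcal U},\mathcal I_{\mathcal V}}^2),\qquad L_{\mathcal Q}^2=2(L_{h_B,\mathcal I_{\mathcal Q}}^2+L_S^2L_{e_{\mathcal P},\mathcal I_{\mathcal Q}}^2).$$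
   Context: $\partial_u\mathcal L=\nabla f(u)+B^\top p$, $\partial_p\mathcal L=Bu-\nabla h(p)$; a saddle point satisfies $\nabla\mathcal L(u^*,p^* )=0$. For SPD $M$, $\|x\|_M=(Mx,x)^{1/2}$; $D_g(y,x)=g(y)-g(x)-(\nabla g(x),y-x)$; $g\in\mathcal S^{1,1}_{\mu_{g,M},L_{g,M}}$ w.r.t. $M$ means $\frac{\mu_{g,M}}2\|x-y\|_M^2\le D_g(y,x)\le\frac{L_{g,M}}2\|x-y\|_M^2$ for all $x,y$. Define $f_B(u)=f(u)+\frac12(B^\top T_{\mathcal P}^{-1}Bu,u)$, $h_B(p)=h(p)+\frac12(BT_{\mathcal U}^{-1}B^\top p,p)$, $e_{\mathcal U}(u)=u-T_{\mathcal U}^{-1}\nabla f(u)$, $e_{\mathcal P}(p)=p-T_{\mathcal P}^{-1}\nabla h(p)$, $\mathcal G^u(u,p)=-\mathcal I_{\mathcal V}^{-1}(\partial_u\mathcal L+B^\top T_{\mathcal P}^{-1}\partial_p\mathcal L)$, $\mathcal G^p(u,p)=\mathcal I_{\mathcal Q}^{-1}(\partial_p\mathcal L-BT_{\mathcal U}^{-1}\partial_u\mathcal L)$, and $\mathcal E(u,p)=\frac12\|u-u^*\|^2_{\mathcal I_{\mathcal V}}+\frac12\|p-p^*\|^2_{\mathcal I_{\mathcal Q}}$. $L_{f_B,\mathcal I_{\mathcal V}}$, $L_{h_B,\mathcal I_{\mathcal Q}}$ are the Lipschitz constants of $\nabla f_B,\nabla h_B$ (in the sense $\|\nabla f_B(u_1)-\nabla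 f_B(u_2)\|_{\mathcal I_{\mathcal V}^{-1}}\le L_{f_B,\mathcal I_{\mathcal V}}\|u_1-u_2\|_{\mathcal I_{\mathcal V}}$, similarly for $h_B$ with $\mathcal I_{\mathcal Q}$); $L_{e_{\mathcal U},\mathcal I_{\mathcal V}}$, $L_{e_{\mathcal P},\mathcal I_{\mathcal Q}}$ are the Lipschitz constants of $e_{\mathcal U}$ in $\|\cdot\|_{\mathcal I_{\mathcal V}}$ and of $e_{\mathcal P}$ in $\|\cdot\|_{\mathcal I_{\mathcal Q}}$; $L_S^2=\lambda_{\max}(\mathcal I_{\mathcal Q}^{-1}B\mathcal I_{\mathcal V}^{-1}B^\top)$. *)

theory Defs
  imports "HOL-Analysis.Analysis"
begin

definition spd :: "real^'n^'n \<Rightarrow> bool" where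
  "spd M \<longleftrightarrow> transpose M = M \<and> (\<forall>x. x \<noteq> 0 \<longrightarrow> (M *v x) \<bullet> x > 0)"

definition mnorm :: "real^'n^'n \<Rightarrow> real^'n \<Rightarrow> real" where
  "mnorm M x = sqrt ((M *v x) \<bullet> x)"

definition bregman :: "(real^'n \<Rightarrow> real) \<Rightarrow> (real^'n \<Rightarrow> real^'n) \<Rightarrow> real^'n \<Rightarrow> real^'n \<Rightarrow> real" where
  "bregman g dg y x = g y - g x - dg x \<bullet> (y - x)"

definition S11 :: "(real^'n \<Rightarrow> real) \<Rightarrow> (real^'n \<Rightarrow> real^'n) \<Rightarrow> real \<Rightarrow> real \<Rightarrow> real^'n^'n \<Rightarrow> bool" where
  "S11 g dg mu L M \<longleftrightarrow> (\<forall>x y. mu / 2 * (mnorm M (x - y))\<^sup>2 \<le> bregman g dg y x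
                              \<and> bregman g dg y x \<le> L / 2 * (mnorm M (x - y))\<^sup>2)"

definition strongly_convex_wrt :: "(real^'n \<Rightarrow> real) \<Rightarrow> (real^'n \<Rightarrow> real^'n) \<Rightarrow> real \<Rightarrow> real^'n^'n \<Rightarrow> bool" where
  "strongly_convex_wrt g dg mu M \<longleftrightarrow> (\<forall>x y. mu / 2 * (mnorm M (x - y))\<^sup>2 \<le> bregman g dg y x)"

definition lip_const :: "('a \<Rightarrow> real) \<Rightarrow> ('b \<Rightarrow> real) \<Rightarrow> ('a::real_vector \<Rightarrow> 'b::real_vector) \<Rightarrow> real" where
  "lip_const N1 N2 F = Inf {L. 0 \<le> L \<and> (\<forall>x y. N2 (F x - F y) \<le> L * N1 (x - y))}"

text \<open>Largest eigenvalue of a square real matrix (all its eigenvalues are real here).\<close>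
definition lambda_max :: "real^'n^'n \<Rightarrow> real" where
  "lambda_max A = Max {l. \<exists>v. v \<noteq> 0 \<and> A *v v = l *\<^sub>R v}"

end

theory Submission
  imports Defs
begin

text \<open>Both updates are explicit gradient steps \<open>u\<^sub>k\<^sub>+\<^sub>1 = u\<^sub>k - \<alpha> \<I>\<^sub>\<V>\<^sup>-\<^sup>1 g\<^sub>u\<close>,
  \<open>p\<^sub>k\<^sub>+\<^sub>1 = p\<^sub>k - \<alpha> \<I>\<^sub>\<Q>\<^sup>-\<^sup>1 g\<^sub>p\<close>, and the saddle point equations turn the directions into
  differences \<open>g\<^sub>u = (\<nabla>f\<^sub>B(u\<^sub>k) - \<nabla>f\<^sub>B(u\<^sup>*)) + B\<^sup>T(e\<^sub>P(p\<^sub>k) - e\<^sub>P(p\<^sup>*))\<close> and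
  \<open>g\<^sub>p = (\<nabla>h\<^sub>B(p\<^sub>k) - \<nabla>h\<^sub>B(p\<^sup>*)) - B(e\<^sub>U(u\<^sub>k) - e\<^sub>U(u\<^sup>*))\<close>. Expanding the energy gives
  \<open>2\<E>\<^sub>k\<^sub>+\<^sub>1 = 2\<E>\<^sub>k - 2\<alpha>(\<langle>u\<^sub>k - u\<^sup>*, g\<^sub>u\<rangle> + \<langle>p\<^sub>k - p\<^sup>*, g\<^sub>p\<rangle>) + \<alpha>\<^sup>2(\<parallel>g\<^sub>u\<parallel>\<^sup>2 + \<parallel>g\<^sub>p\<parallel>\<^sup>2)\<close>
  in the dual norms. Since \<open>L \<le> 1\<close>, the gradients of \<open>f\<close> and \<open>h\<close> are cocoercive in the norms of
  \<open>T\<^sub>\<U>\<^sup>-\<^sup>1\<close> and \<open>T\<^sub>\<P>\<^sup>-\<^sup>1\<close>; with this the coupling terms cancel up to squares, so the linear term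
  dominates half the strong monotonicity of \<open>\<nabla>f\<^sub>B\<close> and \<open>\<nabla>h\<^sub>B\<close>. The quadratic term is bounded by
  the Lipschitz constants of \<open>\<nabla>f\<^sub>B\<close>, \<open>\<nabla>h\<^sub>B\<close>, \<open>e\<^sub>U\<close>, \<open>e\<^sub>P\<close> and by \<open>L\<^sub>S\<^sup>2\<close>, the largest
  generalized eigenvalue controlling \<open>B\<close> and \<open>B\<^sup>T\<close> between the dual norms.\<close>

section \<open>Quadratic forms of positive definite matrices\<close>

declare transpose_matrix_vector [simp del]

definition qform :: "real^'n^'n \<Rightarrow> real^'n \<Rightarrow> real" where
  "qform M x = (M *v x) \<bullet> x"

lemma inner_transpose_mv: "(transpose A *v y) \<bullet> x = y \<bullet> (A *v x)"
  for A :: "real^'m^'n"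
  by (simp add: dot_lmul_matrix transpose_matrix_vector)

lemma inner_mv_transpose: "(A *v x) \<bullet> y = x \<bullet> (transpose A *v y)"
  for A :: "real^'m^'n"
  using inner_transpose_mv[of "transpose A" x y] by simp

lemma symmetric_inner_mv:
  fixes M :: "real^'n^'n"
  assumes "transpose M = M"
  shows "(M *v x) \<bullet> y = (M *v y) \<bullet> x"
  using inner_mv_transpose[of M x y] assms by (simp add: inner_commute)

lemma qform_add:
  "transpose M = M \<Longrightarrow> qform M (x + y) = qform M x + 2 * ((M *v x) \<bullet> y) + qform M y"
  unfolding qform_def using symmetric_inner_mv[of M y x]
  by (simp add: matrix_vector_right_distrib inner_add_left inner_add_right)

lemma qform_diff:
  "transpose M = M \<Longrightarrow> qform M (x - y) = qform M x - 2 * ((M *v x) \<bullet> y) + qform M y"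
  unfolding qform_def using symmetric_inner_mv[of M y x]
  by (simp add: matrix_vector_mult_diff_distrib inner_diff_left inner_diff_right)

lemma qform_scaleR: "qform M (c *\<^sub>R x) = c\<^sup>2 * qform M x"
  unfolding qform_def by (simp add: matrix_vector_mult_scaleR power2_eq_square)

lemma qform_minus: "qform M (- x) = qform M x"
  using qform_scaleR[of M "-1" x] by simp

lemma qform_zero [simp]: "qform M 0 = 0"
  by (simp add: qform_def)

lemma qform_continuous_on: "continuous_on A (qform M)"
  unfolding qform_def by (intro continuous_intros linear_continuous_on
      bounded_linear.linear matrix_vector_mul_bounded_linear)

lemma spd_symmetric: "spd M \<Longrightarrow> transpose M = M"
  by (simp add: spd_def)

lemma spd_qform_pos: "spd M \<Longrightarrow> x \<noteq> 0 \<Longrightarrow> 0 < qform M x"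
  unfolding spd_def qform_def by auto

lemma spd_qform_nonneg:
  assumes "spd M"
  shows "0 \<le> qform M x"
proof (cases "x = 0")
  case False
  then show ?thesis
    using spd_qform_pos[OF assms] less_imp_le by blast
qed simp

lemma mnorm_eq_sqrt_qform: "mnorm M x = sqrt (qform M x)"
  by (simp add: mnorm_def qform_def)

lemma mnorm_nonneg: "spd M \<Longrightarrow> 0 \<le> mnorm M x"
  by (simp add: mnorm_eq_sqrt_qform spd_qform_nonneg)

lemma mnorm_power2: "spd M \<Longrightarrow> (mnorm M x)\<^sup>2 = qform M x"
  by (simp add: mnorm_eq_sqrt_qform spd_qform_nonneg)

lemma qform_parallelogram_le:
  assumes "spd M"
  shows "qform M (x + y) \<le> 2 * qform M x + 2 * qform M y"
  using qform_add[of M x y] qform_diff[of M x y] spd_qform_nonneg[OF assms, of "x - y"]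
    spd_symmetric[OF assms] by linarith

lemma spd_invertible:
  assumes "spd M"
  shows "invertible M"
proof -
  have "\<forall>x. M *v x = 0 \<longrightarrow> x = 0"
    using spd_qform_pos[OF assms] unfolding qform_def by fastforce
  then show ?thesis
    using matrix_left_invertible_ker invertible_left_inverse by blast
qed

lemma matrix_inv_invertible:
  assumes "invertible M"
  shows "M ** matrix_inv M = mat 1" "matrix_inv M ** M = mat 1"
proof -
  have "\<exists>N. M ** N = mat 1 \<and> N ** M = mat 1"
    using assms unfolding invertible_def by blast
  from someI_ex[OF this] show "M ** matrix_inv M = mat 1" "matrix_inv M ** M = mat 1"
    unfolding matrix_inv_def by auto
qed

lemma spd_matrix_inv_mv_cancel:
  assumes "spd M"
  shows "matrix_inv M *v (M *v x) = x" "M *v (matrix_inv M *v x) = x"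
  by (simp_all add: matrix_vector_mul_assoc matrix_inv_invertible[OF spd_invertible[OF assms]])

lemma spd_matrix_inv:
  assumes "spd M"
  shows "spd (matrix_inv M)"
proof -
  let ?N = "matrix_inv M"
  have "transpose ?N = transpose ?N ** (M ** ?N)"
    by (simp add: matrix_inv_invertible[OF spd_invertible[OF assms]])
  also have "\<dots> = transpose (transpose M ** ?N) ** ?N"
    by (simp add: matrix_mul_assoc matrix_transpose_mul)
  also have "\<dots> = ?N"
    by (simp add: spd_symmetric[OF assms] matrix_inv_invertible[OF spd_invertible[OF assms]])
  finally have "transpose ?N = ?N" .
  moreover have "0 < (?N *v x) \<bullet> x" if "x \<noteq> 0" for x
  proof -
    have "?N *v x \<noteq> 0"
      using that spd_matrix_inv_mv_cancel(2)[OF assms, of x] by auto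
    then have "0 < qform M (?N *v x)"
      by (rule spd_qform_pos[OF assms])
    then show ?thesis
      by (simp add: qform_def spd_matrix_inv_mv_cancel[OF assms] inner_commute)
  qed
  ultimately show ?thesis
    unfolding spd_def by blast
qed

lemma spd_cauchy_schwarz:
  assumes "spd M"
  shows "((M *v z) \<bullet> y)\<^sup>2 \<le> qform M z * qform M y"
proof (cases "y = 0")
  case False
  define t where "t = ((M *v z) \<bullet> y) / qform M y"
  have pos: "0 < qform M y"
    using spd_qform_pos[OF assms False] .
  have "0 \<le> qform M (z - t *\<^sub>R y)"
    by (rule spd_qform_nonneg[OF assms])
  also have "\<dots> = qform M z - ((M *v z) \<bullet> y)\<^sup>2 / qform M y"
    using qform_diff[OF spd_symmetric[OF assms], of z "t *\<^sub>R y"] pos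
    by (simp add: t_def qform_scaleR inner_scaleR_right power2_eq_square field_simps)
  finally show ?thesis
    using pos by (simp add: divide_le_eq mult.commute)
qed (simp add: qform_def)

lemma spd_dual_cauchy_schwarz:
  assumes "spd M"
  shows "(g \<bullet> d)\<^sup>2 \<le> qform (matrix_inv M) g * qform M d"
  using spd_cauchy_schwarz[OF assms, of "matrix_inv M *v g" d]
  by (simp add: spd_matrix_inv_mv_cancel[OF assms] qform_def inner_commute)

lemma qform_inverse_step:
  assumes "spd V"
  shows "qform V (x - t *\<^sub>R (matrix_inv V *v g))
           = qform V x - 2 * t * (x \<bullet> g) + t\<^sup>2 * qform (matrix_inv V) g"
proof -
  have "(V *v x) \<bullet> (t *\<^sub>R (matrix_inv V *v g)) = t * (x \<bullet> g)"
    using symmetric_inner_mv[OF spd_symmetric[OF assms], of x "matrix_inv V *v g"]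
    by (simp add: spd_matrix_inv_mv_cancel[OF assms] inner_commute)
  moreover have "qform V (matrix_inv V *v g) = qform (matrix_inv V) g"
    unfolding qform_def by (simp add: spd_matrix_inv_mv_cancel[OF assms] inner_commute)
  ultimately show ?thesis
    unfolding qform_diff[OF spd_symmetric[OF assms]] qform_scaleR by simp
qed

section \<open>Lipschitz constants in the norms of positive definite matrices\<close>

lemma qform_le_norm_power2:
  fixes M :: "real^'n^'n"
  shows "\<exists>C\<ge>0. \<forall>x. qform M x \<le> C * (norm x)\<^sup>2"
proof -
  obtain K where K: "K > 0" "\<And>x. norm (M *v x) \<le> norm x * K"
    using bounded_linear.pos_bounded[OF matrix_vector_mul_bounded_linear[of M]] by blast
  have "qform M x \<le> K * (norm x)\<^sup>2" for x
  proof -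
    have "qform M x \<le> norm (M *v x) * norm x"
      unfolding qform_def by (rule norm_cauchy_schwarz)
    also have "\<dots> \<le> norm x * K * norm x"
      using K(2) by (rule mult_right_mono) simp
    finally show ?thesis
      by (simp add: power2_eq_square mult_ac)
  qed
  with K(1) show ?thesis
    using less_imp_le by blast
qed

lemma spd_qform_ge_norm_power2:
  fixes M :: "real^'n^'n"
  assumes "spd M"
  shows "\<exists>c>0. \<forall>x. c * (norm x)\<^sup>2 \<le> qform M x"
proof -
  obtain x0 where x0: "x0 \<in> sphere 0 1" "\<And>y. y \<in> sphere 0 1 \<Longrightarrow> qform M x0 \<le> qform M y"
    using continuous_attains_inf[OF compact_sphere _ qform_continuous_on, of "0::real^'n" 1 M]
    by auto
  have "qform M x0 * (norm x)\<^sup>2 \<le> qform M x" for x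
  proof (cases "x = 0")
    case False
    have "qform M x0 \<le> qform M (x /\<^sub>R norm x)"
      using False by (intro x0(2)) simp
    also have "\<dots> = qform M x / (norm x)\<^sup>2"
      using False by (simp add: qform_scaleR field_simps)
    finally show ?thesis
      using False by (simp add: le_divide_eq)
  qed simp
  moreover have "x0 \<noteq> 0"
    using x0(1) by auto
  then have "0 < qform M x0"
    by (rule spd_qform_pos[OF assms])
  ultimately show ?thesis by blast
qed

lemma lipschitz_on_mnorm:
  assumes "spd M1" and lip: "C-lipschitz_on UNIV F"
  shows "\<exists>L\<ge>0. \<forall>x y. mnorm M2 (F x - F y) \<le> L * mnorm M1 (x - y)"
proof -
  obtain c where c: "c > 0" "\<And>x. c * (norm x)\<^sup>2 \<le> qform M1 x"
    using spd_qform_ge_norm_power2[OF assms(1)] by blast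
  obtain K where K: "K \<ge> 0" "\<And>x. qform M2 x \<le> K * (norm x)\<^sup>2"
    using qform_le_norm_power2 by blast
  have "mnorm M2 (F x - F y) \<le> (sqrt K * C / sqrt c) * mnorm M1 (x - y)" for x y
  proof -
    have "mnorm M2 (F x - F y) \<le> sqrt (K * (norm (F x - F y))\<^sup>2)"
      unfolding mnorm_eq_sqrt_qform using K(2) by (rule real_sqrt_le_mono)
    also have "\<dots> = sqrt K * norm (F x - F y)"
      by (simp add: real_sqrt_mult)
    also have "\<dots> \<le> sqrt K * (C * norm (x - y))"
      using lipschitz_on_normD[OF lip, of x y] K(1) by (intro mult_left_mono) auto
    also have "sqrt c * norm (x - y) \<le> mnorm M1 (x - y)"
      using real_sqrt_le_mono[OF c(2)] by (simp add: mnorm_eq_sqrt_qform real_sqrt_mult)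
    then have "norm (x - y) \<le> mnorm M1 (x - y) / sqrt c"
      using c(1) by (simp add: le_divide_eq mult.commute)
    then have "sqrt K * (C * norm (x - y)) \<le> sqrt K * (C * (mnorm M1 (x - y) / sqrt c))"
      using lipschitz_on_nonneg[OF lip] K(1) by (intro mult_left_mono) auto
    finally show ?thesis by simp
  qed
  moreover have "0 \<le> sqrt K * C / sqrt c"
    using K(1) c(1) lipschitz_on_nonneg[OF lip] by simp
  ultimately show ?thesis by blast
qed

lemma lipschitz_on_UNIV_if_bound:
  assumes "\<And>x y. norm (F x - F y) \<le> L * norm (x - y)"
  shows "\<bar>L\<bar>-lipschitz_on UNIV F"
proof (rule lipschitz_onI)
  show "dist (F x) (F y) \<le> \<bar>L\<bar> * dist x y" for x y
    using assms[of x y] abs_ge_self[of L] mult_right_mono[of L "\<bar>L\<bar>" "norm (x - y)"]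
    by (simp add: dist_norm)
qed simp

lemma lipschitz_on_matrix_vector_mult:
  fixes A :: "real^'m^'n"
  shows "\<exists>K. K-lipschitz_on S ((*v) A)"
  using bounded_linear.lipschitz_boundE[OF matrix_vector_mul_bounded_linear[of A], of S] by blast

lemma lip_const_bound:
  assumes ex: "\<exists>L\<ge>0. \<forall>x y. N2 (F x - F y) \<le> L * N1 (x - y)" and nonneg: "\<And>x. 0 \<le> N1 x"
  shows "0 \<le> lip_const N1 N2 F" "N2 (F x - F y) \<le> lip_const N1 N2 F * N1 (x - y)"
proof -
  let ?S = "{L. 0 \<le> L \<and> (\<forall>x y. N2 (F x - F y) \<le> L * N1 (x - y))}"
  have ne: "?S \<noteq> {}" using ex by blast
  show "0 \<le> lip_const N1 N2 F"
    unfolding lip_const_def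
  proof (rule cInf_greatest[OF ne])
    show "0 \<le> L" if "L \<in> ?S" for L
      using that by blast
  qed
  show "N2 (F x - F y) \<le> lip_const N1 N2 F * N1 (x - y)"
  proof (cases "N1 (x - y) = 0")
    case True
    obtain L where "L \<in> ?S"
      using ne by blast
    then have "N2 (F x - F y) \<le> L * N1 (x - y)"
      by blast
    with True show ?thesis
      by simp
  next
    case False
    then have pos: "0 < N1 (x - y)"
      using nonneg[of "x - y"] by linarith
    have "N2 (F x - F y) / N1 (x - y) \<le> lip_const N1 N2 F"
      unfolding lip_const_def
    proof (rule cInf_greatest[OF ne])
      fix L assume "L \<in> ?S"
      with pos show "N2 (F x - F y) / N1 (x - y) \<le> L"
        by (simp add: divide_le_eq)
    qed
    with pos show ?thesis
      by (simp add: divide_le_eq)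
  qed
qed

lemma qform_lip_const_bound:
  assumes "spd M1" "spd M2" "C-lipschitz_on UNIV F"
  shows "qform M2 (F x - F y) \<le> (lip_const (mnorm M1) (mnorm M2) F)\<^sup>2 * qform M1 (x - y)"
proof -
  have "mnorm M2 (F x - F y) \<le> lip_const (mnorm M1) (mnorm M2) F * mnorm M1 (x - y)"
    using lip_const_bound(2)[OF lipschitz_on_mnorm[OF assms(1,3)] mnorm_nonneg[OF assms(1)]] .
  then have "(mnorm M2 (F x - F y))\<^sup>2 \<le> (lip_const (mnorm M1) (mnorm M2) F * mnorm M1 (x - y))\<^sup>2"
    using mnorm_nonneg[OF assms(2)] by (rule power_mono)
  then show ?thesis
    by (simp add: mnorm_power2 assms(1,2) power_mult_distrib)
qed

section \<open>Smooth and strongly convex functions\<close>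

lemma convex_on_gradient_inequality:
  fixes f :: "real^'n \<Rightarrow> real"
  assumes convex: "convex_on UNIV f" and deriv: "(f has_derivative (\<lambda>d. g \<bullet> d)) (at x)"
  shows "f x + g \<bullet> (y - x) \<le> f y"
proof -
  define \<phi> where "\<phi> t = f (x + t *\<^sub>R (y - x))" for t :: real
  have "convex_on UNIV \<phi>"
  proof (rule convex_onI)
    fix t a b :: real
    assume "0 < t" "t < 1"
    have "x + ((1 - t) *\<^sub>R a + t *\<^sub>R b) *\<^sub>R (y - x)
        = (1 - t) *\<^sub>R (x + a *\<^sub>R (y - x)) + t *\<^sub>R (x + b *\<^sub>R (y - x))"
      by (simp add: algebra_simps)
    with convex_onD[OF convex, of t] \<open>0 < t\<close> \<open>t < 1\<close>
    show "\<phi> ((1 - t) *\<^sub>R a + t *\<^sub>R b) \<le> (1 - t) * \<phi> a + t * \<phi> b"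
      by (simp add: \<phi>_def)
  qed simp
  have "((\<lambda>t. x + t *\<^sub>R (y - x)) has_derivative (\<lambda>t. t *\<^sub>R (y - x))) (at 0)"
    by (auto intro!: derivative_eq_intros)
  from has_derivative_compose[OF this, of f "\<lambda>d. g \<bullet> d"] deriv
  have "(\<phi> has_derivative (\<lambda>t. t * (g \<bullet> (y - x)))) (at 0)"
    by (simp add: \<phi>_def[abs_def])
  then have "(\<phi> has_field_derivative g \<bullet> (y - x)) (at 0)"
    by (simp add: has_field_derivative_def mult.commute[of _ "g \<bullet> (y - x)"])
  from convex_on_imp_above_tangent[OF \<open>convex_on UNIV \<phi>\<close> _ _ _ this, of 1]
  show ?thesis
    by (simp add: \<phi>_def)
qed

text \<open>Evaluate \<open>f\<close> at \<open>z = y - T\<^sup>-\<^sup>1 (\<nabla>f y - \<nabla>f x)\<close>: smoothness at \<open>y\<close> bounds \<open>f z\<close>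
  from above and the gradient inequality at \<open>x\<close> bounds it from below.\<close>
lemma smooth_convex_bregman_lower_bound:
  fixes f :: "real^'n \<Rightarrow> real"
  assumes convex: "convex_on UNIV f" and deriv: "\<And>x. (f has_derivative (\<lambda>d. gf x \<bullet> d)) (at x)"
    and "spd T" and smooth: "\<And>x y. bregman f gf y x \<le> 1/2 * (mnorm T (x - y))\<^sup>2"
  shows "1/2 * qform (matrix_inv T) (gf y - gf x) \<le> bregman f gf y x"
proof -
  define g where "g = gf y - gf x"
  define z where "z = y - matrix_inv T *v g"
  have "f z - f y - gf y \<bullet> (z - y) \<le> 1/2 * (mnorm T (y - z))\<^sup>2"
    using smooth[where x = y and y = z] by (simp only: bregman_def)
  also have "(mnorm T (y - z))\<^sup>2 = g \<bullet> (matrix_inv T *v g)"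
    by (simp add: mnorm_power2 \<open>spd T\<close> z_def qform_def spd_matrix_inv_mv_cancel[OF \<open>spd T\<close>])
  finally have upper: "f z \<le> f y - gf y \<bullet> (matrix_inv T *v g) + 1/2 * (g \<bullet> (matrix_inv T *v g))"
    by (simp add: z_def inner_diff_right)
  have "f x + gf x \<bullet> (y - x) - gf x \<bullet> (matrix_inv T *v g) \<le> f z"
    using convex_on_gradient_inequality[OF convex deriv, of x z] by (simp add: z_def inner_diff_right)
  with upper have "1/2 * (g \<bullet> (matrix_inv T *v g)) \<le> f y - f x - gf x \<bullet> (y - x)"
    unfolding g_def inner_diff_left by argo
  then show ?thesis
    by (simp add: bregman_def qform_def g_def inner_commute)
qed

lemma smooth_convex_cocoercive:
  fixes f :: "real^'n \<Rightarrow> real"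
  assumes "convex_on UNIV f" "\<And>x. (f has_derivative (\<lambda>d. gf x \<bullet> d)) (at x)"
    and "spd T" "\<And>x y. bregman f gf y x \<le> 1/2 * (mnorm T (x - y))\<^sup>2"
  shows "qform (matrix_inv T) (gf x - gf y) \<le> (gf x - gf y) \<bullet> (x - y)"
proof -
  have "bregman f gf y x + bregman f gf x y = (gf x - gf y) \<bullet> (x - y)"
    by (simp add: bregman_def inner_diff_left inner_diff_right)
  with smooth_convex_bregman_lower_bound[OF assms, of x y]
    smooth_convex_bregman_lower_bound[OF assms, of y x]
  show ?thesis
    using qform_minus[of "matrix_inv T" "gf x - gf y"] by simp
qed

lemma strongly_convex_imp_strongly_monotone:
  assumes "strongly_convex_wrt g dg mu M" "spd M"
  shows "mu * qform M (x - y) \<le> (dg x - dg y) \<bullet> (x - y)"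
proof -
  have "bregman g dg y x + bregman g dg x y = (dg x - dg y) \<bullet> (x - y)"
    by (simp add: bregman_def inner_diff_left inner_diff_right)
  with assms(1)[unfolded strongly_convex_wrt_def, rule_format, of x y]
    assms(1)[unfolded strongly_convex_wrt_def, rule_format, of y x]
  show ?thesis
    using qform_minus[of M "x - y"] by (simp add: mnorm_power2 assms(2))
qed

lemma strongly_monotone_le_lipschitz:
  fixes F :: "real^'n \<Rightarrow> real^'n"
  assumes "spd M" "0 \<le> mu"
    and monotone: "\<And>x y. mu * qform M (x - y) \<le> (F x - F y) \<bullet> (x - y)"
    and lipschitz: "\<And>x y. qform (matrix_inv M) (F x - F y) \<le> L\<^sup>2 * qform M (x - y)"
  shows "mu\<^sup>2 \<le> L\<^sup>2"
proof -
  define e :: "real^'n" where "e = 1"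
  define g where "g = F e - F 0"
  have pos: "0 < qform M e"
    by (rule spd_qform_pos[OF assms(1)]) (simp add: e_def vec_eq_iff)
  have "(mu * qform M e)\<^sup>2 \<le> (g \<bullet> e)\<^sup>2"
    using monotone[of e 0] pos \<open>0 \<le> mu\<close> by (intro power_mono) (simp_all add: g_def)
  also have "\<dots> \<le> qform (matrix_inv M) g * qform M e"
    by (rule spd_dual_cauchy_schwarz[OF assms(1)])
  also have "\<dots> \<le> L\<^sup>2 * qform M e * qform M e"
    using lipschitz[of e 0] pos by (simp add: g_def)
  finally have "mu\<^sup>2 * (qform M e)\<^sup>2 \<le> L\<^sup>2 * (qform M e)\<^sup>2"
    by (simp add: power_mult_distrib power2_eq_square mult_ac)
  with pos show ?thesis
    by simp
qed

lemma S11_imp_bregman_le_half: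
  assumes "S11 g dg mu L M" "L \<le> 1"
  shows "bregman g dg y x \<le> 1/2 * (mnorm M (x - y))\<^sup>2"
proof -
  have "bregman g dg y x \<le> L / 2 * (mnorm M (x - y))\<^sup>2"
    using assms(1) unfolding S11_def by blast
  also have "\<dots> \<le> 1/2 * (mnorm M (x - y))\<^sup>2"
    using assms(2) by (intro mult_right_mono) simp_all
  finally show ?thesis .
qed

section \<open>Eigenvalues and the coupling constant\<close>

lemma linear_eigenvectors_span_invariant:
  assumes "linear f" "\<And>l. l \<in> L \<Longrightarrow> f (v l) = l *\<^sub>R v l" "x \<in> span (v ` L)"
  shows "f x \<in> span (v ` L)"
proof -
  have "f (v l) \<in> span (v ` L)" if "l \<in> L" for l
    using assms(2)[OF that] span_scale[OF span_base[OF imageI[OF that]]] by simp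
  then have "f ` (v ` L) \<subseteq> span (v ` L)"
    by blast
  then have "span (f ` (v ` L)) \<subseteq> span (v ` L)"
    by (simp add: span_minimal)
  with assms(1,3) show ?thesis
    by (auto simp: span_linear_image)
qed

lemma linear_eigenvector_in_span_eq_0:
  assumes "linear f" "finite L" "\<And>l. l \<in> L \<Longrightarrow> f (v l) = l *\<^sub>R v l"
    and "x \<in> span (v ` L)" "f x = m *\<^sub>R x" "m \<notin> L"
  shows "x = 0"
  using assms(2-)
proof (induction L arbitrary: x m)
  case (insert l L)
  obtain c where y: "x - c *\<^sub>R v l \<in> span (v ` L)"
    using insert.prems(2) span_breakdown_eq by (metis image_insert)
  define y where "y = x - c *\<^sub>R v l"
  have "f y = f x - c *\<^sub>R f (v l)"
    by (simp add: y_def linear_diff[OF assms(1)] linear_scale[OF assms(1)])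
  then have "f y - l *\<^sub>R y = (m - l) *\<^sub>R x"
    using insert.prems(1,3) by (simp add: y_def algebra_simps)
  moreover have "f y - l *\<^sub>R y \<in> span (v ` L)"
    using linear_eigenvectors_span_invariant[OF assms(1), of L v y] insert.prems(1) y
    by (simp add: y_def span_diff span_scale)
  moreover have "f ((m - l) *\<^sub>R x) = m *\<^sub>R ((m - l) *\<^sub>R x)"
    using insert.prems(3) linear_scale[OF assms(1)] by simp
  ultimately have "(m - l) *\<^sub>R x = 0"
    using insert.IH[of "(m - l) *\<^sub>R x" m] insert.prems(1,4) by auto
  with insert.prems(4) show ?case
    by simp
qed simp

text \<open>Eigenvectors for distinct eigenvalues are linearly independent, so there are at most
  \<open>DIM('a)\<close> eigenvalues.\<close>
lemma linear_finite_eigenvalues: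
  fixes f :: "'a::euclidean_space \<Rightarrow> 'a"
  assumes "linear f"
  shows "finite {l. \<exists>v. v \<noteq> 0 \<and> f v = l *\<^sub>R v}" (is "finite ?S")
proof (rule ccontr)
  define v where "v l = (SOME v. v \<noteq> 0 \<and> f v = l *\<^sub>R v)" for l
  have v: "v l \<noteq> 0" "f (v l) = l *\<^sub>R v l" if "l \<in> ?S" for l
    using someI_ex[of "\<lambda>v. v \<noteq> 0 \<and> f v = l *\<^sub>R v"] that by (auto simp: v_def)
  have independent: "independent (v ` L)" if "finite L" "L \<subseteq> ?S" for L
    using that
  proof (induction L)
    case (insert l L)
    have "v l \<notin> span (v ` L)"
      using linear_eigenvector_in_span_eq_0[OF assms insert.hyps(1), of v "v l" l] insert v
      by blast
    with insert show ?case
      by (simp add: independent_insertI)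
  qed (simp add: independent_empty)
  have "inj_on v ?S"
    by (rule inj_onI) (metis v scaleR_cancel_right)
  assume "infinite ?S"
  then obtain L where L: "finite L" "L \<subseteq> ?S" "card L = Suc DIM('a)"
    using infinite_arbitrarily_large by blast
  have "card (v ` L) \<le> DIM('a)"
    using independent_bound[OF independent[OF L(1,2)]] by blast
  moreover have "card (v ` L) = card L"
    using card_image inj_on_subset[OF \<open>inj_on v ?S\<close> L(2)] by blast
  ultimately show False
    using L(3) by simp
qed

lemma lambda_max_ge:
  fixes A :: "real^'n^'n"
  assumes "v \<noteq> 0" "A *v v = l *\<^sub>R v"
  shows "l \<le> lambda_max A"
  unfolding lambda_max_def
  using linear_finite_eigenvalues[OF matrix_vector_mul_linear[of A]] assms
  by (intro Max_ge) auto

text \<open>Otherwise the form would be positive at \<open>b + t *\<^sub>R (R *v b)\<close> for small \<open>t > 0\<close>.\<close>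
lemma nsd_qform_zero_imp_kernel:
  fixes R :: "real^'n^'n"
  assumes "transpose R = R" "\<And>x. qform R x \<le> 0" "qform R b = 0"
  shows "R *v b = 0"
proof (rule ccontr)
  define w where "w = R *v b"
  assume "R *v b \<noteq> 0"
  then have w: "0 < w \<bullet> w"
    by (simp add: w_def)
  define K where "K = qform R w"
  define t where "t = (w \<bullet> w) / (\<bar>K\<bar> + 1)"
  have t: "0 < t" "t * \<bar>K\<bar> < w \<bullet> w"
    using w by (simp_all add: t_def field_simps)
  have "qform R (b + t *\<^sub>R w) = t * (2 * (w \<bullet> w) + t * K)"
    using assms(1,3) by (simp add: qform_add qform_scaleR K_def w_def power2_eq_square algebra_simps)
  moreover have "- (t * K) \<le> t * \<bar>K\<bar>"
    using t(1) abs_ge_minus_self[of "t * K"] by (simp add: abs_mult)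
  with t w have "0 < t * (2 * (w \<bullet> w) + t * K)"
    by (intro mult_pos_pos) linarith+
  ultimately show False
    using assms(2)[of "b + t *\<^sub>R w"] by simp
qed

lemma generalized_rayleigh_max:
  fixes M Q :: "real^'n^'n"
  assumes "transpose M = M" "spd Q"
  shows "\<exists>l b. b \<noteq> 0 \<and> M *v b = l *\<^sub>R (Q *v b) \<and> (\<forall>x. qform M x \<le> l * qform Q x)"
proof -
  let ?R = "\<lambda>x. qform M x / qform Q x"
  have "qform Q x \<noteq> 0" if "x \<in> sphere 0 1" for x
    using that spd_qform_pos[OF assms(2), of x] by fastforce
  then have "continuous_on (sphere 0 1) ?R"
    by (intro continuous_on_divide qform_continuous_on) blast
  then obtain b where b: "b \<in> sphere 0 1" "\<And>y. y \<in> sphere 0 1 \<Longrightarrow> ?R y \<le> ?R b"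
    using continuous_attains_sup[OF compact_sphere _ \<open>continuous_on (sphere 0 1) ?R\<close>] by auto
  define l where "l = ?R b"
  have "b \<noteq> 0"
    using b(1) by auto
  then have Qb: "0 < qform Q b"
    by (rule spd_qform_pos[OF assms(2)])
  have le: "qform M x \<le> l * qform Q x" for x
  proof (cases "x = 0")
    case False
    have "?R x = ?R (x /\<^sub>R norm x)"
      using False by (simp add: qform_scaleR)
    also have "\<dots> \<le> l"
      unfolding l_def using False by (intro b(2)) simp
    finally show ?thesis
      using spd_qform_pos[OF assms(2) False] by (simp add: divide_le_eq)
  qed simp
  define R where "R = M - l *\<^sub>R Q"
  have qR: "qform R x = qform M x - l * qform Q x" for x
    by (simp add: R_def qform_def matrix_vector_mult_diff_rdistrib scaleR_matrix_vector_assoc[symmetric]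
        inner_diff_left)
  have "transpose R = transpose M - l *\<^sub>R transpose Q"
    by (simp add: R_def transpose_def vec_eq_iff)
  then have "transpose R = R"
    by (simp add: R_def assms(1) spd_symmetric[OF assms(2)])
  moreover have "qform R x \<le> 0" for x
    using le[of x] by (simp add: qR)
  moreover have "qform R b = 0"
    using Qb by (simp add: qR l_def)
  ultimately have "R *v b = 0"
    by (rule nsd_qform_zero_imp_kernel)
  then have "M *v b = l *\<^sub>R (Q *v b)"
    by (simp add: R_def matrix_vector_mult_diff_rdistrib scaleR_matrix_vector_assoc[symmetric])
  with \<open>b \<noteq> 0\<close> le show ?thesis
    by blast
qed

lemma qform_transpose_le_lambda_max:
  fixes B :: "real^'m^'n" and V :: "real^'m^'m" and Q :: "real^'n^'n"
  assumes "spd V" "spd Q"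
  defines "\<Lambda> \<equiv> lambda_max (matrix_inv Q ** B ** matrix_inv V ** transpose B)"
  shows "0 \<le> \<Lambda>" "qform (matrix_inv V) (transpose B *v b) \<le> \<Lambda> * qform Q b"
proof -
  let ?M = "B ** matrix_inv V ** transpose B"
  have qM: "qform ?M x = qform (matrix_inv V) (transpose B *v x)" for x
    by (simp add: qform_def matrix_vector_mul_assoc[symmetric] inner_mv_transpose)
  have "transpose ?M = ?M"
    by (simp add: matrix_transpose_mul matrix_mul_assoc spd_symmetric[OF spd_matrix_inv[OF assms(1)]])
  then obtain l c where c: "c \<noteq> 0" "?M *v c = l *\<^sub>R (Q *v c)"
    and le: "\<And>x. qform ?M x \<le> l * qform Q x"
    using generalized_rayleigh_max[OF _ assms(2)] by blast
  have "(matrix_inv Q ** B ** matrix_inv V ** transpose B) *v c = matrix_inv Q *v (?M *v c)"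
    by (simp add: matrix_vector_mul_assoc matrix_mul_assoc)
  also have "\<dots> = l *\<^sub>R c"
    using c(2) by (simp add: matrix_vector_mult_scaleR spd_matrix_inv_mv_cancel[OF assms(2)])
  finally have "l \<le> \<Lambda>"
    unfolding \<Lambda>_def using c(1) by (rule lambda_max_ge[rotated])
  moreover have "0 \<le> l"
  proof -
    have "qform ?M c = l * qform Q c"
      using c(2) by (simp add: qform_def)
    moreover have "0 \<le> qform ?M c"
      unfolding qM by (rule spd_qform_nonneg[OF spd_matrix_inv[OF assms(1)]])
    ultimately show ?thesis
      using spd_qform_pos[OF assms(2) c(1)] by (simp add: zero_le_mult_iff)
  qed
  ultimately show "0 \<le> \<Lambda>"
    by simp
  have "qform ?M b \<le> \<Lambda> * qform Q b"
    using le[of b] mult_right_mono[OF \<open>l \<le> \<Lambda>\<close> spd_qform_nonneg[OF assms(2)]]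
    by (rule order_trans)
  then show "qform (matrix_inv V) (transpose B *v b) \<le> \<Lambda> * qform Q b"
    by (simp add: qM)
qed

text \<open>Test \<open>B d\<close> against \<open>b = Q\<^sup>-\<^sup>1 B d\<close> and use the dual Cauchy--Schwarz inequality
  for \<open>V\<close>.\<close>
lemma qform_bound_from_transpose:
  fixes B :: "real^'m^'n" and V :: "real^'m^'m" and Q :: "real^'n^'n"
  assumes "spd V" "spd Q" "0 \<le> c"
    and transpose_bound: "\<And>b. qform (matrix_inv V) (transpose B *v b) \<le> c * qform Q b"
  shows "qform (matrix_inv Q) (B *v d) \<le> c * qform V d"
proof -
  define b where "b = matrix_inv Q *v (B *v d)"
  define s where "s = qform (matrix_inv Q) (B *v d)"
  have s: "0 \<le> s" "qform Q b = s"
    using spd_qform_nonneg[OF spd_matrix_inv[OF assms(2)]]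
    by (simp_all add: s_def b_def qform_def inner_commute spd_matrix_inv_mv_cancel[OF assms(2)])
  have "s = (transpose B *v b) \<bullet> d"
    by (simp add: s_def b_def qform_def inner_transpose_mv)
  then have "s\<^sup>2 = ((transpose B *v b) \<bullet> d)\<^sup>2"
    by simp
  also have "\<dots> \<le> qform (matrix_inv V) (transpose B *v b) * qform V d"
    by (rule spd_dual_cauchy_schwarz[OF assms(1)])
  also have "\<dots> \<le> c * s * qform V d"
    using transpose_bound[of b] spd_qform_nonneg[OF assms(1)] by (simp add: s(2) mult_right_mono)
  finally have "s * s \<le> s * (c * qform V d)"
    by (simp add: power2_eq_square mult_ac)
  then show ?thesis
    using s(1) spd_qform_nonneg[OF assms(1), of d] \<open>0 \<le> c\<close>
    by (cases "s = 0") (simp_all add: s_def)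
qed

section \<open>One step of the primal-dual iteration\<close>

text \<open>In the notation of the paper, \<open>aug_grad B T\<^sub>P \<nabla>f = \<nabla>f\<^sub>B\<close>,
  \<open>aug_grad B\<^sup>T T\<^sub>U \<nabla>h = \<nabla>h\<^sub>B\<close>, \<open>grad_step T\<^sub>U \<nabla>f = e\<^sub>U\<close> and
  \<open>grad_step T\<^sub>P \<nabla>h = e\<^sub>P\<close>.\<close>
definition aug_grad :: "real^'m^'n \<Rightarrow> real^'n^'n \<Rightarrow> (real^'m \<Rightarrow> real^'m) \<Rightarrow> real^'m \<Rightarrow> real^'m"
  where "aug_grad B T g v = g v + (transpose B ** matrix_inv T ** B) *v v"

definition grad_step :: "real^'n^'n \<Rightarrow> (real^'n \<Rightarrow> real^'n) \<Rightarrow> real^'n \<Rightarrow> real^'n"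
  where "grad_step T g x = x - matrix_inv T *v g x"

lemma lipschitz_aug_grad:
  assumes "C-lipschitz_on UNIV g"
  shows "\<exists>K. K-lipschitz_on UNIV (aug_grad B T g)"
proof -
  obtain K where "K-lipschitz_on UNIV ((*v) (transpose B ** matrix_inv T ** B))"
    using lipschitz_on_matrix_vector_mult by blast
  from lipschitz_on_add[OF assms this] show ?thesis
    unfolding aug_grad_def[abs_def] by blast
qed

lemma lipschitz_grad_step:
  assumes "C-lipschitz_on UNIV g"
  shows "\<exists>K. K-lipschitz_on UNIV (grad_step T g)"
proof -
  obtain K where "K-lipschitz_on (range g) ((*v) (matrix_inv T))"
    using lipschitz_on_matrix_vector_mult by blast
  from lipschitz_on_diff[OF lipschitz_on_id lipschitz_on_compose2[OF assms this]]
  show ?thesis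
    unfolding grad_step_def[abs_def] by blast
qed

lemma two_block_descent:
  fixes qV qQ \<alpha> \<delta> S P \<mu>V \<mu>Q LV LQ :: real
  assumes "0 \<le> qV" "0 \<le> qQ" "0 < \<alpha>"
    and monotone: "\<mu>V * qV + \<mu>Q * qQ \<le> 2 * S" and bounded: "P \<le> LV * qV + LQ * qQ"
    and "\<delta> \<le> \<alpha> * (\<mu>V - LV * \<alpha>)" "\<delta> \<le> \<alpha> * (\<mu>Q - LQ * \<alpha>)"
  shows "qV + qQ - 2 * \<alpha> * S + \<alpha>\<^sup>2 * P \<le> (1 - \<delta>) * (qV + qQ)"
proof -
  have "\<alpha> * (\<mu>V * qV + \<mu>Q * qQ) \<le> \<alpha> * (2 * S)"
    using mult_left_mono[OF monotone] \<open>0 < \<alpha>\<close> by simp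
  moreover have "\<alpha>\<^sup>2 * P \<le> \<alpha>\<^sup>2 * (LV * qV + LQ * qQ)"
    using bounded by (simp add: mult_left_mono)
  ultimately have "qV + qQ - 2 * \<alpha> * S + \<alpha>\<^sup>2 * P
      \<le> qV * (1 - \<alpha> * (\<mu>V - LV * \<alpha>)) + qQ * (1 - \<alpha> * (\<mu>Q - LQ * \<alpha>))"
    by (simp add: algebra_simps power2_eq_square)
  also have "\<dots> \<le> qV * (1 - \<delta>) + qQ * (1 - \<delta>)"
    using assms(1,2,6,7) by (intro add_mono mult_left_mono) simp_all
  finally show ?thesis
    by (simp add: algebra_simps)
qed

lemma step_rate_bounds:
  fixes \<alpha> \<mu> L :: real
  assumes "0 < \<alpha>" "0 < \<mu>" "\<alpha> < \<mu> / L" "2 * \<mu>\<^sup>2 \<le> L"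
  shows "0 < \<alpha> * (\<mu> - L * \<alpha>)" "\<alpha> * (\<mu> - L * \<alpha>) < 1"
proof -
  have "0 < \<mu>\<^sup>2"
    using assms(2) by simp
  with assms(4) have "0 < L"
    by linarith
  with assms(1,3) show "0 < \<alpha> * (\<mu> - L * \<alpha>)"
    by (simp add: field_simps)
  have "\<alpha> * (\<mu> - L * \<alpha>) \<le> \<alpha> * \<mu> - 2 * (\<alpha> * \<mu>)\<^sup>2"
    using mult_left_mono[OF assms(4), of "\<alpha>\<^sup>2"]
    by (simp add: algebra_simps power2_eq_square)
  also have "\<dots> < 1"
    using zero_le_power2[of "\<alpha> * \<mu> - 1/4"] by (simp add: power2_eq_square algebra_simps)
  finally show "\<alpha> * (\<mu> - L * \<alpha>) < 1" .
qed

locale saddle_point_problem =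
  fixes B :: "real^'m^'n"
    and gf :: "real^'m \<Rightarrow> real^'m" and gh :: "real^'n \<Rightarrow> real^'n"
    and TU IV :: "real^'m^'m" and TP IQ :: "real^'n^'n"
    and ustar :: "real^'m" and pstar :: "real^'n"
  assumes spd: "spd TU" "spd IV" "spd TP" "spd IQ"
    and saddle: "gf ustar + transpose B *v pstar = 0" "B *v ustar - gh pstar = 0"
    and cocoercive_f: "\<And>x y. qform (matrix_inv TU) (gf x - gf y) \<le> (gf x - gf y) \<bullet> (x - y)"
    and cocoercive_h: "\<And>x y. qform (matrix_inv TP) (gh x - gh y) \<le> (gh x - gh y) \<bullet> (x - y)"
begin

abbreviation "gfB \<equiv> aug_grad B TP gf"
abbreviation "ghB \<equiv> aug_grad (transpose B) TU gh"
abbreviation "eU \<equiv> grad_step TU gf"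
abbreviation "eP \<equiv> grad_step TP gh"

lemma primal_direction_eq:
  "gf u + transpose B *v (p - matrix_inv TP *v (gh p - B *v u))
     = (gfB u - gfB ustar) + transpose B *v (eP p - eP pstar)"
proof -
  have direction: "gf v + transpose B *v (q - matrix_inv TP *v (gh q - B *v v))
      = gfB v + transpose B *v eP q" for v q
    by (simp add: aug_grad_def grad_step_def matrix_vector_mul_assoc[symmetric]
        matrix_vector_mult_diff_distrib algebra_simps)
  have "gfB ustar + transpose B *v eP pstar = 0"
    using direction[of ustar pstar] saddle by simp
  then show ?thesis
    unfolding direction
    by (simp add: matrix_vector_mult_diff_distrib add_eq_0_iff2)
qed

lemma dual_direction_eq:
  "gh p - B *v (u - matrix_inv TU *v (gf u + transpose B *v p))
     = (ghB p - ghB pstar) - B *v (eU u - eU ustar)"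
proof -
  have direction: "gh q - B *v (v - matrix_inv TU *v (gf v + transpose B *v q))
      = ghB q - B *v eU v" for v q
    by (simp add: aug_grad_def grad_step_def matrix_vector_mul_assoc[symmetric]
        matrix_vector_mult_diff_distrib matrix_vector_right_distrib algebra_simps)
  have "ghB pstar - B *v eU ustar = 0"
    using direction[of pstar ustar] saddle by simp
  then show ?thesis
    unfolding direction
    by (simp add: matrix_vector_mult_diff_distrib)
qed

text \<open>The coupling terms cancel, and cocoercivity of \<open>\<nabla>f\<close> and \<open>\<nabla>h\<close> leaves the squares
  \<open>\<parallel>X + Y\<parallel>\<^sup>2\<close> and \<open>\<parallel>Z - W\<parallel>\<^sup>2\<close> in the norms of \<open>T\<^sub>U\<^sup>-\<^sup>1\<close> and \<open>T\<^sub>P\<^sup>-\<^sup>1\<close>.\<close>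
lemma cross_term_bound:
  "(gfB u - gfB ustar) \<bullet> (u - ustar) + (ghB p - ghB pstar) \<bullet> (p - pstar)
     \<le> 2 * ((u - ustar) \<bullet> (gfB u - gfB ustar + transpose B *v (eP p - eP pstar))
          + (p - pstar) \<bullet> (ghB p - ghB pstar - B *v (eU u - eU ustar)))"
proof -
  let ?Ui = "matrix_inv TU" and ?Pi = "matrix_inv TP"
  define du dp where "du = u - ustar" and "dp = p - pstar"
  define X Z where "X = gf u - gf ustar" and "Z = gh p - gh pstar"
  define W Y where "W = B *v du" and "Y = transpose B *v dp"
  have a: "gfB u - gfB ustar = X + transpose B *v (?Pi *v W)"
    by (simp add: aug_grad_def X_def W_def du_def matrix_vector_mul_assoc[symmetric]
        matrix_vector_mult_diff_distrib algebra_simps)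
  have c: "ghB p - ghB pstar = Z + B *v (?Ui *v Y)"
    by (simp add: aug_grad_def Z_def Y_def dp_def matrix_vector_mul_assoc[symmetric]
        matrix_vector_mult_diff_distrib algebra_simps)
  have b: "eP p - eP pstar = dp - ?Pi *v Z" and d: "eU u - eU ustar = du - ?Ui *v X"
    by (simp_all add: grad_step_def Z_def X_def dp_def du_def matrix_vector_mult_diff_distrib
        algebra_simps)
  have "du \<bullet> (transpose B *v b') = W \<bullet> b'" for b'
    by (simp add: W_def inner_mv_transpose)
  moreover have "dp \<bullet> (B *v d') = Y \<bullet> d'" for d'
    by (simp add: Y_def inner_transpose_mv)
  moreover have "W \<bullet> dp = du \<bullet> Y"
    unfolding W_def Y_def by (rule inner_mv_transpose)
  moreover have "(transpose B *v (?Pi *v W)) \<bullet> du = qform ?Pi W"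
    and "(B *v (?Ui *v Y)) \<bullet> dp = qform ?Ui Y"
    by (simp_all add: qform_def W_def Y_def inner_transpose_mv inner_mv_transpose)
  moreover have "0 \<le> qform ?Ui (X + Y)" "0 \<le> qform ?Pi (Z - W)"
    using spd spd_qform_nonneg spd_matrix_inv by blast+
  moreover have "qform ?Ui (X + Y) = qform ?Ui X + 2 * (Y \<bullet> (?Ui *v X)) + qform ?Ui Y"
    using qform_add[OF spd_symmetric[OF spd_matrix_inv[OF spd(1)]]] by (simp add: inner_commute)
  moreover have "qform ?Pi (Z - W) = qform ?Pi Z - 2 * (W \<bullet> (?Pi *v Z)) + qform ?Pi W"
    using qform_diff[OF spd_symmetric[OF spd_matrix_inv[OF spd(3)]]] by (simp add: inner_commute)
  moreover have "qform ?Ui X \<le> X \<bullet> du" "qform ?Pi Z \<le> Z \<bullet> dp"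
    unfolding X_def Z_def du_def dp_def by (rule cocoercive_f, rule cocoercive_h)
  ultimately show ?thesis
    unfolding a b c d du_def[symmetric] dp_def[symmetric]
    by (simp add: inner_add_left inner_add_right inner_diff_right inner_commute)
qed

lemma step_contraction:
  fixes u :: "real^'m" and p :: "real^'n" and \<alpha> \<delta> \<mu>V \<mu>Q LfB LhB LeU LeP \<Lambda> :: real
  assumes monotone_f: "\<And>x y. \<mu>V * qform IV (x - y) \<le> (gfB x - gfB y) \<bullet> (x - y)"
    and monotone_h: "\<And>x y. \<mu>Q * qform IQ (x - y) \<le> (ghB x - ghB y) \<bullet> (x - y)"
    and lipschitz_gfB: "\<And>x y. qform (matrix_inv IV) (gfB x - gfB y) \<le> LfB * qform IV (x - y)"
    and lipschitz_ghB: "\<And>x y. qform (matrix_inv IQ) (ghB x - ghB y) \<le> LhB * qform IQ (x - y)"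
    and lipschitz_eU: "\<And>x y. qform IV (eU x - eU y) \<le> LeU * qform IV (x - y)"
    and lipschitz_eP: "\<And>x y. qform IQ (eP x - eP y) \<le> LeP * qform IQ (x - y)"
    and coupling_transpose: "\<And>b. qform (matrix_inv IV) (transpose B *v b) \<le> \<Lambda> * qform IQ b"
    and coupling: "\<And>d. qform (matrix_inv IQ) (B *v d) \<le> \<Lambda> * qform IV d"
    and "0 \<le> \<Lambda>" "0 < \<alpha>"
    and rate: "\<delta> \<le> \<alpha> * (\<mu>V - 2 * (LfB + \<Lambda> * LeU) * \<alpha>)"
      "\<delta> \<le> \<alpha> * (\<mu>Q - 2 * (LhB + \<Lambda> * LeP) * \<alpha>)"
  defines "u' \<equiv> u - \<alpha> *\<^sub>R (matrix_inv IV *v (gf u + transpose B *v (p - matrix_inv TP *v (gh p - B *v u))))"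
    and "p' \<equiv> p - \<alpha> *\<^sub>R (matrix_inv IQ *v (gh p - B *v (u - matrix_inv TU *v (gf u + transpose B *v p))))"
  shows "qform IV (u' - ustar) + qform IQ (p' - pstar)
           \<le> (1 - \<delta>) * (qform IV (u - ustar) + qform IQ (p - pstar))"
proof -
  define du dp where "du = u - ustar" and "dp = p - pstar"
  define a b where "a = gfB u - gfB ustar" and "b = eP p - eP pstar"
  define c d where "c = ghB p - ghB pstar" and "d = eU u - eU ustar"
  have "u' - ustar = du - \<alpha> *\<^sub>R (matrix_inv IV *v (a + transpose B *v b))"
    by (simp add: u'_def du_def a_def b_def primal_direction_eq)
  then have u': "qform IV (u' - ustar) = qform IV du - 2 * \<alpha> * (du \<bullet> (a + transpose B *v b))
      + \<alpha>\<^sup>2 * qform (matrix_inv IV) (a + transpose B *v b)"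
    by (simp add: qform_inverse_step spd(2))
  have "p' - pstar = dp - \<alpha> *\<^sub>R (matrix_inv IQ *v (c - B *v d))"
    by (simp add: p'_def dp_def c_def d_def dual_direction_eq)
  then have p': "qform IQ (p' - pstar) = qform IQ dp - 2 * \<alpha> * (dp \<bullet> (c - B *v d))
      + \<alpha>\<^sup>2 * qform (matrix_inv IQ) (c - B *v d)"
    by (simp add: qform_inverse_step spd(4))
  have monotone: "\<mu>V * qform IV du + \<mu>Q * qform IQ dp
      \<le> 2 * (du \<bullet> (a + transpose B *v b) + dp \<bullet> (c - B *v d))"
    using monotone_f[of u ustar, folded a_def du_def] monotone_h[of p pstar, folded c_def dp_def]
      cross_term_bound[of u p, folded a_def b_def c_def d_def du_def dp_def]
    by linarith
  have bound_u: "qform (matrix_inv IV) (a + transpose B *v b)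
      \<le> 2 * (LfB * qform IV du) + 2 * (\<Lambda> * (LeP * qform IQ dp))"
    using qform_parallelogram_le[OF spd_matrix_inv[OF spd(2)], of a "transpose B *v b"]
      lipschitz_gfB[of u ustar, folded a_def du_def] coupling_transpose[of b]
      mult_left_mono[OF lipschitz_eP[of p pstar, folded b_def dp_def] \<open>0 \<le> \<Lambda>\<close>]
    by linarith
  have bound_p: "qform (matrix_inv IQ) (c - B *v d)
      \<le> 2 * (LhB * qform IQ dp) + 2 * (\<Lambda> * (LeU * qform IV du))"
    using qform_parallelogram_le[OF spd_matrix_inv[OF spd(4)], of c "- (B *v d)"]
      lipschitz_ghB[of p pstar, folded c_def dp_def] coupling[of d]
      mult_left_mono[OF lipschitz_eU[of u ustar, folded d_def du_def] \<open>0 \<le> \<Lambda>\<close>]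
    by (simp add: qform_minus)
  have "qform (matrix_inv IV) (a + transpose B *v b) + qform (matrix_inv IQ) (c - B *v d)
      \<le> 2 * (LfB + \<Lambda> * LeU) * qform IV du + 2 * (LhB + \<Lambda> * LeP) * qform IQ dp"
    using bound_u bound_p by (simp add: algebra_simps)
  from two_block_descent[OF spd_qform_nonneg[OF spd(2)] spd_qform_nonneg[OF spd(4)]
      \<open>0 < \<alpha>\<close> monotone this rate]
  show ?thesis
    unfolding u' p' du_def[symmetric] dp_def[symmetric] by (simp add: algebra_simps)
qed

end

context saddle_point_problem
begin

definition "LS_sq = lambda_max (matrix_inv IQ ** B ** matrix_inv IV ** transpose B)"

definition "LV_sq = 2 * ((lip_const (mnorm IV) (mnorm (matrix_inv IV)) gfB)\<^sup>2
                      + LS_sq * (lip_const (mnorm IV) (mnorm IV) eU)\<^sup>2)"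

definition "LQ_sq = 2 * ((lip_const (mnorm IQ) (mnorm (matrix_inv IQ)) ghB)\<^sup>2
                      + LS_sq * (lip_const (mnorm IQ) (mnorm IQ) eP)\<^sup>2)"

lemma linear_convergence_step:
  fixes u :: "real^'m" and p :: "real^'n" and \<alpha> \<mu>V \<mu>Q C D :: real
  assumes lipschitz: "C-lipschitz_on UNIV gf" "D-lipschitz_on UNIV gh"
    and monotone_f: "\<And>x y. \<mu>V * qform IV (x - y) \<le> (gfB x - gfB y) \<bullet> (x - y)"
    and monotone_h: "\<And>x y. \<mu>Q * qform IQ (x - y) \<le> (ghB x - ghB y) \<bullet> (x - y)"
    and \<mu>_pos: "0 < \<mu>V" "0 < \<mu>Q"
    and \<alpha>_pos: "0 < \<alpha>" and \<alpha>_bound: "\<alpha> < min (\<mu>V / LV_sq) (\<mu>Q / LQ_sq)"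
  defines "\<delta> \<equiv> min (\<alpha> * (\<mu>V - LV_sq * \<alpha>)) (\<alpha> * (\<mu>Q - LQ_sq * \<alpha>))"
    and "u' \<equiv> u - \<alpha> *\<^sub>R (matrix_inv IV *v (gf u + transpose B *v (p - matrix_inv TP *v (gh p - B *v u))))"
    and "p' \<equiv> p - \<alpha> *\<^sub>R (matrix_inv IQ *v (gh p - B *v (u - matrix_inv TU *v (gf u + transpose B *v p))))"
  shows "0 < \<delta>" "\<delta> < 1"
    and "qform IV (u' - ustar) + qform IQ (p' - pstar)
           \<le> (1 - \<delta>) * (qform IV (u - ustar) + qform IQ (p - pstar))"
proof -
  obtain K1 where "K1-lipschitz_on UNIV gfB"
    using lipschitz_aug_grad[OF lipschitz(1)] by blast
  note lip_gfB = qform_lip_const_bound[OF spd(2) spd_matrix_inv[OF spd(2)] this]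
  obtain K2 where "K2-lipschitz_on UNIV ghB"
    using lipschitz_aug_grad[OF lipschitz(2)] by blast
  note lip_ghB = qform_lip_const_bound[OF spd(4) spd_matrix_inv[OF spd(4)] this]
  obtain K3 where "K3-lipschitz_on UNIV eU"
    using lipschitz_grad_step[OF lipschitz(1)] by blast
  note lip_eU = qform_lip_const_bound[OF spd(2) spd(2) this]
  obtain K4 where "K4-lipschitz_on UNIV eP"
    using lipschitz_grad_step[OF lipschitz(2)] by blast
  note lip_eP = qform_lip_const_bound[OF spd(4) spd(4) this]
  have LS: "0 \<le> LS_sq" "\<And>b. qform (matrix_inv IV) (transpose B *v b) \<le> LS_sq * qform IQ b"
    unfolding LS_sq_def using qform_transpose_le_lambda_max[OF spd(2,4)] by blast+
  have "\<mu>V\<^sup>2 \<le> (lip_const (mnorm IV) (mnorm (matrix_inv IV)) gfB)\<^sup>2"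
    using strongly_monotone_le_lipschitz[OF spd(2) _ monotone_f lip_gfB] \<mu>_pos by simp
  then have "2 * \<mu>V\<^sup>2 \<le> LV_sq"
    unfolding LV_sq_def using LS(1) by (simp add: add_increasing2)
  then have V: "0 < \<alpha> * (\<mu>V - LV_sq * \<alpha>)" "\<alpha> * (\<mu>V - LV_sq * \<alpha>) < 1"
    using step_rate_bounds[of \<alpha> \<mu>V LV_sq] \<mu>_pos \<alpha>_pos \<alpha>_bound by simp_all
  have "\<mu>Q\<^sup>2 \<le> (lip_const (mnorm IQ) (mnorm (matrix_inv IQ)) ghB)\<^sup>2"
    using strongly_monotone_le_lipschitz[OF spd(4) _ monotone_h lip_ghB] \<mu>_pos by simp
  then have "2 * \<mu>Q\<^sup>2 \<le> LQ_sq"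
    unfolding LQ_sq_def using LS(1) by (simp add: add_increasing2)
  then have Q: "0 < \<alpha> * (\<mu>Q - LQ_sq * \<alpha>)"
    using step_rate_bounds[of \<alpha> \<mu>Q LQ_sq] \<mu>_pos \<alpha>_pos \<alpha>_bound by simp
  from V Q show "0 < \<delta>" "\<delta> < 1"
    unfolding \<delta>_def by simp_all
  show "qform IV (u' - ustar) + qform IQ (p' - pstar)
      \<le> (1 - \<delta>) * (qform IV (u - ustar) + qform IQ (p - pstar))"
    unfolding u'_def p'_def
    by (rule step_contraction[OF monotone_f monotone_h lip_gfB lip_ghB lip_eU lip_eP LS(2)
          qform_bound_from_transpose[OF spd(2,4) LS] LS(1) \<alpha>_pos])
      (simp_all only: \<delta>_def LV_sq_def[symmetric] LQ_sq_def[symmetric] min.cobounded1 min.cobounded2)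
qed

end

theorem theorem5p5:
  fixes B :: "real^'m^'n"
    and f :: "real^'m \<Rightarrow> real" and gf :: "real^'m \<Rightarrow> real^'m"
    and h :: "real^'n \<Rightarrow> real" and gh :: "real^'n \<Rightarrow> real^'n"
    and TU IV :: "real^'m^'m" and TP IQ :: "real^'n^'n"
    and ustar :: "real^'m" and pstar :: "real^'n"
    and mu_f L_f mu_h L_h mu_fB mu_hB :: real
    and u uh :: "nat \<Rightarrow> real^'m" and p ph :: "nat \<Rightarrow> real^'n"
    and alpha :: "nat \<Rightarrow> real" and k :: nat
  assumes dims: "CARD('n) \<le> CARD('m)"
    and rankB: "rank B = CARD('n)"
    and f_conv: "convex_on UNIV f" and h_conv: "convex_on UNIV h"
    and f_grad: "\<And>x. (f has_derivative (\<lambda>d. gf x \<bullet> d)) (at x)"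
    and h_grad: "\<And>x. (h has_derivative (\<lambda>d. gh x \<bullet> d)) (at x)"
    and f_C1: "continuous_on UNIV gf" and h_C1: "continuous_on UNIV gh"
    and f_lip: "\<exists>L. \<forall>x y. norm (gf x - gf y) \<le> L * norm (x - y)"
    and h_lip: "\<exists>L. \<forall>x y. norm (gh x - gh y) \<le> L * norm (x - y)"
    and saddle: "gf ustar + transpose B *v pstar = 0" "B *v ustar - gh pstar = 0"
    and spd: "spd TU" "spd IV" "spd TP" "spd IQ"
    and h_S11: "S11 h gh mu_h L_h TP" and L_h_le: "L_h \<le> 1"
    and f_S11: "S11 f gf mu_f L_f TU" and L_f_le: "L_f \<le> 1"
    and fB_sc: "strongly_convex_wrt
                  (\<lambda>v. f v + 1/2 * (((transpose B ** matrix_inv TP ** B) *v v) \<bullet> v))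
                  (\<lambda>v. gf v + (transpose B ** matrix_inv TP ** B) *v v) mu_fB IV"
    and mu_fB_pos: "mu_fB > 0"
    and hB_sc: "strongly_convex_wrt
                  (\<lambda>q. h q + 1/2 * (((B ** matrix_inv TU ** transpose B) *v q) \<bullet> q))
                  (\<lambda>q. gh q + (B ** matrix_inv TU ** transpose B) *v q) mu_hB IQ"
    and mu_hB_pos: "mu_hB > 0"
    and iter: "\<And>j. uh j = u j - matrix_inv TU *v (gf (u j) + transpose B *v p j)"
              "\<And>j. ph j = p j - matrix_inv TP *v (gh (p j) - B *v u j)"
              "\<And>j. u (Suc j) = u j - alpha j *\<^sub>R (matrix_inv IV *v (gf (u j) + transpose B *v ph j))"
              "\<And>j. p (Suc j) = p j - alpha j *\<^sub>R (matrix_inv IQ *v (gh (p j) - B *v uh j))"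
  defines "LV2 \<equiv> 2 * ((lip_const (mnorm IV) (mnorm (matrix_inv IV)) (\<lambda>v. gf v + (transpose B ** matrix_inv TP ** B) *v v))\<^sup>2
                     + lambda_max (matrix_inv IQ ** B ** matrix_inv IV ** transpose B) * (lip_const (mnorm IV) (mnorm IV) (\<lambda>v. v - matrix_inv TU *v gf v))\<^sup>2)"
    and "LQ2 \<equiv> 2 * ((lip_const (mnorm IQ) (mnorm (matrix_inv IQ)) (\<lambda>q. gh q + (B ** matrix_inv TU ** transpose B) *v q))\<^sup>2
                     + lambda_max (matrix_inv IQ ** B ** matrix_inv IV ** transpose B) * (lip_const (mnorm IQ) (mnorm IQ) (\<lambda>q. q - matrix_inv TP *v gh q))\<^sup>2)"
    and "E \<equiv> (\<lambda>v q. 1/2 * (mnorm IV (v - ustar))\<^sup>2 + 1/2 * (mnorm IQ (q - pstar))\<^sup>2)"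
  assumes alpha_pos: "0 < alpha k"
    and alpha_bound: "alpha k < min (mu_fB / LV2) (mu_hB / LQ2)"
  shows "let delta = min (alpha k * (mu_fB - LV2 * alpha k)) (alpha k * (mu_hB - LQ2 * alpha k))
         in 0 < delta \<and> delta < 1 \<and> E (u (Suc k)) (p (Suc k)) \<le> (1 - delta) * E (u k) (p k)"
proof -
  have smooth: "\<And>x y. bregman f gf y x \<le> 1/2 * (mnorm TU (x - y))\<^sup>2"
    "\<And>x y. bregman h gh y x \<le> 1/2 * (mnorm TP (x - y))\<^sup>2"
    using S11_imp_bregman_le_half f_S11 L_f_le h_S11 L_h_le by blast+
  interpret saddle_point_problem B gf gh TU IV TP IQ ustar pstar
    using spd saddle smooth_convex_cocoercive[OF f_conv f_grad spd(1) smooth(1)]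
      smooth_convex_cocoercive[OF h_conv h_grad spd(3) smooth(2)]
    by unfold_locales blast+
  have gradients: "gfB = (\<lambda>v. gf v + (transpose B ** matrix_inv TP ** B) *v v)"
    "ghB = (\<lambda>q. gh q + (B ** matrix_inv TU ** transpose B) *v q)"
    "eU = (\<lambda>v. v - matrix_inv TU *v gf v)" "eP = (\<lambda>q. q - matrix_inv TP *v gh q)"
    by (simp_all add: fun_eq_iff aug_grad_def grad_step_def)
  have constants: "LV2 = LV_sq" "LQ2 = LQ_sq"
    by (simp_all add: assms(29,30) LV_sq_def LQ_sq_def LS_sq_def gradients)
  obtain C D where lipschitz: "C-lipschitz_on UNIV gf" "D-lipschitz_on UNIV gh"
    using f_lip h_lip lipschitz_on_UNIV_if_bound by metis
  have monotone: "\<And>x y. mu_fB * qform IV (x - y) \<le> (gfB x - gfB y) \<bullet> (x - y)"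
    "\<And>x y. mu_hB * qform IQ (x - y) \<le> (ghB x - ghB y) \<bullet> (x - y)"
    using strongly_convex_imp_strongly_monotone[OF fB_sc spd(2)]
      strongly_convex_imp_strongly_monotone[OF hB_sc spd(4)] by (simp_all add: gradients)
  note step = linear_convergence_step[OF lipschitz monotone mu_fB_pos mu_hB_pos alpha_pos,
      folded constants, OF alpha_bound]
  from step(1,2) step(3)[where u = "u k" and p = "p k"] show ?thesis
    by (simp add: Let_def assms(31) iter mnorm_power2 spd field_simps)
qed

end
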